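(* Let $P$ be a probability distribution on an input space $\mathcal{X}$ with ground-truth labelling $G^*:\mathcal{X}\to[K]$, and suppose $P$ satisfies $(1/2,b)$-multiplicative-expansion on $\mathcal{X}$ for some $b>1$. Then for every $\rho>0$, $P$ satisfies $\left(\frac{\rho}{b-1},\rho\right)$-constant-expansion.
   Context: Let $\mathcal{T}_{wa}$ be a set of (weak) augmentation maps on $\mathcal{X}$ and $r\ge 0$. For $x\in\mathcal{X}$, $\mathcal{A}(x):=\{x' : \exists T\in\mathcal{T}_{wa}\text{ with }\|x'-T(x)\|\le r\}$; the neighborhood of $x$ is $\mathcal{N}(x):=\{x' : \mathcal{A}(x)\cap\mathcal{A}(x')\neq\emptyset\}$, and for $S\subseteq\mathcal{X}$, $\mathcal{N}(S):=\bigcup_{x\in S}\mathcal{N}(x)$. For $i\in[K]$, $\mathcal{Q}_i:=\{x: G^*(x)=i\}$, and $P_i$ denotes the conditional distribution of $P$ on $\mathcal{Q}_i$, i.e. $P_i(S)=P(S\cap\mathcal{Q}_i)/P(\mathcal{Q}_i)$. The same-class neighborhood is $\mathcal{N}^*(S):=\bigcup_{i\in[K]}\big(\mathcal{N}(S\cap\mathcal{Q}_i)\cap\mathcal{Q}_i\big)$. $P$ satisfies $(a,b)$-multiplicative-expansion if for every $i\in[K]$ and every $S\subseteq\mathcal{Q}_i$ with $P_i(S)\le a$, one has $P_i(\mathcal{N}(S))\ge\min\{bP_i(S),1\}$. $P$ satisfies $(c,\rho)$-constant-expansion if for every $S\subseteq\mathcal{X}$ with $P(S)\ge c$ and $P(S\cap\mathcal{Q}_i)\le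 P(\mathcal{Q}_i)/2$ for all $i\in[K]$, one has $P(\mathcal{N}^*(S)\setminus S)\ge\min\{\rho,P(S)\}$. *)

theory Defs
  imports "HOL-Probability.Probability"
begin

definition aug_set :: "('a::real_normed_vector \<Rightarrow> 'a) set \<Rightarrow> real \<Rightarrow> 'a \<Rightarrow> 'a set" where
  "aug_set Twa r x = {x'. \<exists>T\<in>Twa. norm (x' - T x) \<le> r}"

definition nbhd :: "('a::real_normed_vector \<Rightarrow> 'a) set \<Rightarrow> real \<Rightarrow> 'a \<Rightarrow> 'a set" where
  "nbhd Twa r x = {x'. aug_set Twa r x \<inter> aug_set Twa r x' \<noteq> {}}"

definition nbhd_set :: "('a::real_normed_vector \<Rightarrow> 'a) set \<Rightarrow> real \<Rightarrow> 'a set \<Rightarrow> 'a set" where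
  "nbhd_set Twa r S = (\<Union>x\<in>S. nbhd Twa r x)"

definition cls :: "('a \<Rightarrow> nat) \<Rightarrow> nat \<Rightarrow> 'a set" where
  "cls G i = {x. G x = i}"

definition condP :: "'a measure \<Rightarrow> ('a \<Rightarrow> nat) \<Rightarrow> nat \<Rightarrow> 'a set \<Rightarrow> real" where
  "condP P G i S = measure P (S \<inter> cls G i) / measure P (cls G i)"

definition same_nbhd ::
  "('a::real_normed_vector \<Rightarrow> 'a) set \<Rightarrow> real \<Rightarrow> ('a \<Rightarrow> nat) \<Rightarrow> nat \<Rightarrow> 'a set \<Rightarrow> 'a set" where
  "same_nbhd Twa r G K S = (\<Union>i\<in>{1..K}. nbhd_set Twa r (S \<inter> cls G i) \<inter> cls G i)"

definition mult_expansion ::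
  "'a measure \<Rightarrow> ('a::real_normed_vector \<Rightarrow> 'a) set \<Rightarrow> real \<Rightarrow> ('a \<Rightarrow> nat) \<Rightarrow> nat \<Rightarrow> real \<Rightarrow> real \<Rightarrow> bool" where
  "mult_expansion P Twa r G K a b \<longleftrightarrow>
     (\<forall>i\<in>{1..K}. \<forall>S\<in>sets P. S \<subseteq> cls G i \<longrightarrow> condP P G i S \<le> a \<longrightarrow>
        condP P G i (nbhd_set Twa r S) \<ge> min (b * condP P G i S) 1)"

definition const_expansion ::
  "'a measure \<Rightarrow> ('a::real_normed_vector \<Rightarrow> 'a) set \<Rightarrow> real \<Rightarrow> ('a \<Rightarrow> nat) \<Rightarrow> nat \<Rightarrow> real \<Rightarrow> real \<Rightarrow> bool" where
  "const_expansion P Twa r G K c \<rho> \<longleftrightarrow>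
     (\<forall>S\<in>sets P. measure P S \<ge> c \<longrightarrow>
        (\<forall>i\<in>{1..K}. measure P (S \<inter> cls G i) \<le> measure P (cls G i) / 2) \<longrightarrow>
        measure P (same_nbhd Twa r G K S - S) \<ge> min \<rho> (measure P S))"

end

theory Submission
  imports Defs
begin

text \<open>Within one class Q_i a set S of conditional mass at most 1/2 gains, by multiplicative
  expansion, at least min (b - 1) 1 times its own mass in new same-class neighbours. Summing
  over the classes, N*(S) - S has mass at least min (b - 1) 1 * P(S), and this is at least
  min \<rho> P(S) as soon as P(S) \<ge> \<rho> / (b - 1).\<close>

lemma min_mult_minus_ge:
  fixes b s q :: real
  assumes "b > 1" "0 \<le> s" "2 * s \<le> q"
  shows "min (b - 1) 1 * s \<le> min (b * s) q - s"
proof -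
  have "min (b - 1) 1 * s = min ((b - 1) * s) s"
    using assms(2) mult_right_mono[of "b - 1" 1 s] mult_right_mono[of 1 "b - 1" s]
    by (auto simp: min_def)
  also have "\<dots> \<le> min (b * s) q - s"
    using assms(3) by (simp add: min_def algebra_simps)
  finally show ?thesis .
qed

lemma min_le_min_mult:
  fixes b \<rho> m :: real
  assumes "b > 1" "\<rho> / (b - 1) \<le> m"
  shows "min \<rho> m \<le> min (b - 1) 1 * m"
proof (cases "b - 1 \<le> 1")
  case True
  then show ?thesis using assms by (simp add: divide_le_eq mult.commute)
next
  case False
  then show ?thesis by simp
qed

lemma UN_Int_cls:
  assumes "\<forall>x. G x \<in> I"
  shows "S = (\<Union>i\<in>I. S \<inter> cls G i)"
  using assms by (auto simp: cls_def)

lemma same_nbhd_Diff: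
  "same_nbhd Twa r G K S - S =
     (\<Union>i\<in>{1..K}. nbhd_set Twa r (S \<inter> cls G i) \<inter> cls G i - S \<inter> cls G i)"
  by (auto simp: same_nbhd_def)

lemma measure_UN_cls:
  assumes "finite_measure P" "finite I" "\<forall>i\<in>I. A i \<in> sets P" "\<forall>i\<in>I. A i \<subseteq> cls G i"
  shows "measure P (\<Union>i\<in>I. A i) = (\<Sum>i\<in>I. measure P (A i))"
proof (rule finite_measure.finite_measure_finite_Union)
  show "disjoint_family_on A I"
    using assms(4) unfolding disjoint_family_on_def cls_def by blast
qed (use assms in auto)

lemma mult_expansion_measure:
  assumes "mult_expansion P Twa r G K a b" "i \<in> {1..K}"
    and "S \<in> sets P" "S \<subseteq> cls G i" "measure P S \<le> a * measure P (cls G i)"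
  shows "min (b * measure P S) (measure P (cls G i)) \<le> measure P (nbhd_set Twa r S \<inter> cls G i)"
proof (cases "measure P (cls G i) = 0")
  case True
  then show ?thesis by (simp add: min_le_iff_disj)
next
  case False
  let ?q = "measure P (cls G i)"
  have q: "?q > 0" using False by (simp add: order_le_neq_trans)
  have S_cls: "S \<inter> cls G i = S" using assms(4) by blast
  have "condP P G i S \<le> a"
    using assms(5) q by (simp add: condP_def S_cls divide_le_eq mult.commute)
  then have "min (b * condP P G i S) 1 \<le> condP P G i (nbhd_set Twa r S)"
    using assms(1-4) unfolding mult_expansion_def by blast
  then have "min (b * measure P S / ?q) 1 \<le> measure P (nbhd_set Twa r S \<inter> cls G i) / ?q"
    by (simp add: condP_def S_cls)
  then show ?thesis
    using q by (auto simp: min_def field_simps split: if_splits)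
qed

lemma mult_expansion_boundary:
  assumes "finite_measure P" "mult_expansion P Twa r G K (1/2) b" "b > 1" "i \<in> {1..K}"
    and "cls G i \<in> sets P" "S \<in> sets P" "nbhd_set Twa r S \<in> sets P" "S \<subseteq> cls G i"
    and "measure P S \<le> measure P (cls G i) / 2"
  shows "min (b - 1) 1 * measure P S \<le> measure P (nbhd_set Twa r S \<inter> cls G i - S)"
proof -
  interpret finite_measure P by fact
  let ?N = "nbhd_set Twa r S \<inter> cls G i"
  have N: "?N \<in> sets P" using assms(5,7) by blast
  have "min (b - 1) 1 * measure P S \<le> min (b * measure P S) (measure P (cls G i)) - measure P S"
    using assms(3,9) by (intro min_mult_minus_ge) auto
  also have "\<dots> \<le> measure P ?N - measure P (?N \<inter> S)"
    using mult_expansion_measure[OF assms(2,4,6,8)] assms(6,9)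
      finite_measure_mono[of "?N \<inter> S" S]
    by fastforce
  also have "\<dots> = measure P (?N - S)"
    using finite_measure_Diff'[OF N assms(6)] by simp
  finally show ?thesis .
qed

theorem lemma1:
  fixes P :: "'a::real_normed_vector measure"
    and Twa :: "('a \<Rightarrow> 'a) set" and r :: real
    and G :: "'a \<Rightarrow> nat" and K :: nat and b :: real
  assumes "prob_space P"
    and "space P = UNIV"
    and "r \<ge> 0"
    and "\<forall>x. G x \<in> {1..K}"
    and "\<forall>i\<in>{1..K}. cls G i \<in> sets P"
    and "\<forall>S\<in>sets P. nbhd_set Twa r S \<in> sets P"
    and "b > 1"
    and "mult_expansion P Twa r G K (1/2) b"
  shows "\<forall>\<rho>>0. const_expansion P Twa r G K (\<rho> / (b - 1)) \<rho>"
  unfolding const_expansion_def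
proof (intro allI impI ballI)
  fix \<rho> :: real and S
  assume S: "S \<in> sets P" and big: "\<rho> / (b - 1) \<le> measure P S"
    and half: "\<forall>i\<in>{1..K}. measure P (S \<inter> cls G i) \<le> measure P (cls G i) / 2"
  interpret prob_space P by fact
  let ?c = "min (b - 1) 1" and ?Si = "\<lambda>i. S \<inter> cls G i"
  have Si: "?Si i \<in> sets P" if "i \<in> {1..K}" for i using S assms(5) that by blast
  have "min \<rho> (measure P S) \<le> ?c * measure P S"
    using assms(7) big by (rule min_le_min_mult)
  also have "\<dots> = (\<Sum>i\<in>{1..K}. ?c * measure P (?Si i))"
    by (subst UN_Int_cls[OF assms(4)], subst measure_UN_cls)
      (use Si finite_measure_axioms in \<open>auto simp: sum_distrib_left\<close>)
  also have "\<dots> \<le> (\<Sum>i\<in>{1..K}. measure P (nbhd_set Twa r (?Si i) \<inter> cls G i - ?Si i))"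
    using assms(5-8) half Si finite_measure_axioms by (intro sum_mono mult_expansion_boundary) auto
  also have "\<dots> = measure P (same_nbhd Twa r G K S - S)"
    unfolding same_nbhd_Diff using assms(5,6) Si finite_measure_axioms by (subst measure_UN_cls) auto
  finally show "min \<rho> (measure P S) \<le> measure P (same_nbhd Twa r G K S - S)" .
qed

end
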